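(* Let $H_\varepsilon=T_\varepsilon+V_\varepsilon$ be as in the context. For $x\in(\varepsilon\mathbb Z)^d$ and $R>0$ let $B_x(R):=\{y\in(\varepsilon\mathbb Z)^d:|x-y|<R\}$ and $$\Lambda_R(x,H_\varepsilon):=\inf\Big\{\frac{\langle H_\varepsilon\phi,\phi\rangle}{\|\phi\|^2_{\ell^2}}:\ \phi\in c_0(B_x(R)),\ \phi\ne0\Big\}.$$ Then for every $\delta>0$ there is $R_\delta>0$ such that for all $R>R_\delta$ and all $\phi\in c_0((\varepsilon\mathbb Z)^d)$, $$\langle H_\varepsilon\phi,\phi\rangle\ge\sum_{x\in(\varepsilon\mathbb Z)^d}\big(\Lambda_R(x,H_\varepsilon)-\delta\big)|\phi(x)|^2.$$
   Context: Let $d\ge1$, $\varepsilon\in(0,1]$, $\ell^2((\varepsilon\mathbb Z)^d)$ with $\langle u,v\rangle=\sum_x\bar u(x)v(x)$, $(\tau_\gamma u)(x)=u(x+\gamma)$. For $D\subset(\varepsilon\mathbb Z)^d$, $c_0(D)$ is the space of real-valued functions on $(\varepsilon\mathbb Z)^d$ with finite support contained in $D$. (a) Coefficients $a_\gamma(x,\varepsilon)\in\mathbb R$ ($\gamma\in(\varepsilon\mathbb Z)^d$, $x\in\mathbb R^d$) with: (i) $a_\gamma=a^{(0)}_\gamma(x)+\varepsilon a^{(1)}_\gamma(x)+R^{(2)}_\gamma(x,\varepsilon)$, $a^{(j)}_\gamma\in C^\infty$, $|a^{(j)}_\gamma(x)-a^{(j)}_\gamma(x+h)|=O(|h|)$ uniformly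 in $\gamma,x$, $R^{(2)}_\gamma\in C^\infty(\mathbb R^d\times(0,1])$; (ii) $\sum_\gamma a^{(0)}_\gamma=0$, $a^{(0)}_\gamma\le0$ for $\gamma\ne0$; (iii) $a_\gamma(x,\varepsilon)=a_{-\gamma}(x+\gamma,\varepsilon)$; (iv) for all $n\in\mathbb N,\alpha\in\mathbb N^d$, $\|\,|\cdot/\varepsilon|^n\partial^\alpha_xa^{(j)}_\cdot(x)\|_{\ell^2_\gamma}\le C$ and $\|\,|\cdot/\varepsilon|^n\partial^\alpha_xR^{(2)}_\cdot(x,\varepsilon)\|_{\ell^2_\gamma}\le C\varepsilon^2$ uniformly; (v) $\mathrm{span}\{\gamma:a^{(0)}_\gamma(x)<0\}=\mathbb R^d$ for all $x$. $T_\varepsilon=\sum_\gamma a_\gamma(\cdot,\varepsilon)\tau_\gamma$. (b) $V_\varepsilon$ is the restriction to $(\varepsilon\mathbb Z)^d$ of $\hat V_\varepsilon=V_0+\varepsilon V_1+R_2(\cdot;\varepsilon)\in C^\infty(\mathbb R^d)$, $V_0,V_1\in C^\infty$, $R_2\in C^\infty(\mathbb R^d\times(0,\varepsilon_0])$, $\sup_K|R_2|\le C_K\varepsilon^2$ on compacts $K$; $V_\varepsilon$ polynomially bounded and $V_\varepsilon(x)>C>0$ for $|x|\ge R$, $\varepsilon\le\varepsilon_0$; $V_0\ge0$, vanishing exactly at finitely many points $x_1,\dots,x_m$ with positive definite Hessians. (c) $t_0(x_j,\xi):=\sum_\gamma a^{(0)}_\gamma(x_j)e^{-i\gamma\cdot\xi/\varepsilon}>0$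 for $\xi\notin2\pi\mathbb Z^d$. $H_\varepsilon$ is the self-adjoint realization of $T_\varepsilon+V_\varepsilon$ on the maximal domain of multiplication by $V_\varepsilon$. *)

theory Defs
  imports "HOL-Analysis.Analysis"
begin

definition pderiv_dir :: "'a::real_normed_vector \<Rightarrow> ('a \<Rightarrow> real) \<Rightarrow> 'a \<Rightarrow> real" where
  "pderiv_dir b f x = deriv (\<lambda>t. f (x + t *\<^sub>R b)) 0"

text \<open>Iterated partial derivative: a multi-index is a list of basis directions.\<close>
fun iter_pd :: "'a::real_normed_vector list \<Rightarrow> ('a \<Rightarrow> real) \<Rightarrow> 'a \<Rightarrow> real" where
  "iter_pd [] f = f"
| "iter_pd (b # bs) f = pderiv_dir b (iter_pd bs f)"

definition smooth_on :: "'a::euclidean_space set \<Rightarrow> ('a \<Rightarrow> real) \<Rightarrow> bool" where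
  "smooth_on U f \<longleftrightarrow> open U \<and>
     (\<forall>bs. set bs \<subseteq> Basis \<longrightarrow> (\<forall>x\<in>U. iter_pd bs f differentiable (at x)))"

definition C_inf_on :: "'a::euclidean_space set \<Rightarrow> ('a \<Rightarrow> real) \<Rightarrow> bool" where
  "C_inf_on S f \<longleftrightarrow> (\<exists>U g. S \<subseteq> U \<and> smooth_on U g \<and> (\<forall>x\<in>S. g x = f x))"

definition iv :: "int^'n \<Rightarrow> real^'n" where
  "iv k = (\<chi> i. of_int (k $ i))"

definition lattice :: "real \<Rightarrow> (real^'n) set" where
  "lattice \<epsilon> = {\<epsilon> *\<^sub>R iv k | k. True}"

definition c0 :: "real \<Rightarrow> (real^'n) set \<Rightarrow> (real^'n \<Rightarrow> real) set" where
  "c0 \<epsilon> D = {\<phi>. finite {x. \<phi> x \<noteq> 0} \<and> {x. \<phi> x \<noteq> 0} \<subseteq> D \<inter> lattice \<epsilon>}"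

definition ball_lat :: "real \<Rightarrow> real^'n \<Rightarrow> real \<Rightarrow> (real^'n) set" where
  "ball_lat \<epsilon> x R = {y \<in> lattice \<epsilon>. norm (x - y) < R}"

text \<open>Coefficients a k x eps stand for a_gamma(x,eps) with gamma = eps k, k in Z^d.
  (T u)(x) = sum_gamma a_gamma(x,eps) u(x+gamma).\<close>
definition Top :: "(int^'n \<Rightarrow> real^'n \<Rightarrow> real \<Rightarrow> real) \<Rightarrow> real \<Rightarrow> (real^'n \<Rightarrow> real) \<Rightarrow> real^'n \<Rightarrow> real" where
  "Top a \<epsilon> u x = (\<Sum>\<^sub>\<infinity>k. a k x \<epsilon> * u (x + \<epsilon> *\<^sub>R iv k))"

definition Hop :: "(int^'n \<Rightarrow> real^'n \<Rightarrow> real \<Rightarrow> real) \<Rightarrow> (real^'n \<Rightarrow> real) \<Rightarrow> real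
     \<Rightarrow> (real^'n \<Rightarrow> real) \<Rightarrow> real^'n \<Rightarrow> real" where
  "Hop a V \<epsilon> u x = Top a \<epsilon> u x + V x * u x"

definition lat_inner :: "real \<Rightarrow> (real^'n \<Rightarrow> real) \<Rightarrow> (real^'n \<Rightarrow> real) \<Rightarrow> real" where
  "lat_inner \<epsilon> u v = (\<Sum>\<^sub>\<infinity>x\<in>lattice \<epsilon>. u x * v x)"

definition LambdaR :: "(int^'n \<Rightarrow> real^'n \<Rightarrow> real \<Rightarrow> real) \<Rightarrow> (real^'n \<Rightarrow> real) \<Rightarrow> real
     \<Rightarrow> real \<Rightarrow> real^'n \<Rightarrow> real" where
  "LambdaR a V \<epsilon> R x = Inf {lat_inner \<epsilon> (Hop a V \<epsilon> \<phi>) \<phi> / lat_inner \<epsilon> \<phi> \<phi> | \<phi>.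
       \<phi> \<in> c0 \<epsilon> (ball_lat \<epsilon> x R) \<and> \<phi> \<noteq> (\<lambda>_. 0)}"

text \<open>ell^2_gamma weighted bound: || |gamma/eps|^n f_gamma ||_{ell^2} \<le> C.\<close>
definition l2_weighted_le :: "nat \<Rightarrow> (int^'n \<Rightarrow> real) \<Rightarrow> real \<Rightarrow> bool" where
  "l2_weighted_le n f C \<longleftrightarrow>
     (\<lambda>k. (norm (iv k) ^ n * f k)\<^sup>2) summable_on UNIV \<and>
     sqrt (\<Sum>\<^sub>\<infinity>k. (norm (iv k) ^ n * f k)\<^sup>2) \<le> C"

definition kinetic_hyp :: "(int^'n \<Rightarrow> real^'n \<Rightarrow> real \<Rightarrow> real) \<Rightarrow> (int^'n \<Rightarrow> real^'n \<Rightarrow> real)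
   \<Rightarrow> (int^'n \<Rightarrow> real^'n \<Rightarrow> real) \<Rightarrow> (int^'n \<Rightarrow> real^'n \<Rightarrow> real \<Rightarrow> real) \<Rightarrow> bool" where
  "kinetic_hyp a a0 a1 R2 \<longleftrightarrow>
   \<comment> \<open>(i)\<close>
   (\<forall>k x \<epsilon>. 0 < \<epsilon> \<and> \<epsilon> \<le> 1 \<longrightarrow> a k x \<epsilon> = a0 k x + \<epsilon> * a1 k x + R2 k x \<epsilon>) \<and>
   (\<forall>k. C_inf_on UNIV (a0 k) \<and> C_inf_on UNIV (a1 k)) \<and>
   (\<exists>C. \<forall>k x h. \<bar>a0 k x - a0 k (x + h)\<bar> \<le> C * norm h \<and> \<bar>a1 k x - a1 k (x + h)\<bar> \<le> C * norm h) \<and>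
   (\<forall>k. C_inf_on (UNIV \<times> {0<..1}) (\<lambda>(x, \<epsilon>). R2 k x \<epsilon>)) \<and>
   \<comment> \<open>(ii)\<close>
   (\<forall>x. (\<Sum>\<^sub>\<infinity>k. a0 k x) = 0) \<and>
   (\<forall>k x. k \<noteq> 0 \<longrightarrow> a0 k x \<le> 0) \<and>
   \<comment> \<open>(iii)\<close>
   (\<forall>k x \<epsilon>. 0 < \<epsilon> \<and> \<epsilon> \<le> 1 \<longrightarrow> a k x \<epsilon> = a (- k) (x + \<epsilon> *\<^sub>R iv k) \<epsilon>) \<and>
   \<comment> \<open>(iv)\<close>
   (\<forall>n bs. set bs \<subseteq> Basis \<longrightarrow> (\<exists>C. \<forall>x.
        l2_weighted_le n (\<lambda>k. iter_pd bs (a0 k) x) C \<and>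
        l2_weighted_le n (\<lambda>k. iter_pd bs (a1 k) x) C)) \<and>
   (\<forall>n bs. set bs \<subseteq> Basis \<longrightarrow> (\<exists>C. \<forall>x \<epsilon>. 0 < \<epsilon> \<and> \<epsilon> \<le> 1 \<longrightarrow>
        l2_weighted_le n (\<lambda>k. iter_pd bs (\<lambda>y. R2 k y \<epsilon>) x) (C * \<epsilon>\<^sup>2))) \<and>
   \<comment> \<open>(v)\<close>
   (\<forall>x. span {iv k | k. a0 k x < 0} = UNIV)"

definition pos_def_hessian :: "(real^'n \<Rightarrow> real) \<Rightarrow> real^'n \<Rightarrow> bool" where
  "pos_def_hessian f x \<longleftrightarrow> (\<forall>v. v \<noteq> 0 \<longrightarrow>
     (\<Sum>i\<in>Basis. \<Sum>j\<in>Basis. (v \<bullet> i) * (v \<bullet> j) * iter_pd [i, j] f x) > 0)"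

text \<open>hat V_eps = V0 + eps V1 + RV(., eps); V_eps is its restriction to the lattice.\<close>
definition potential_hyp :: "real \<Rightarrow> (real^'n \<Rightarrow> real) \<Rightarrow> (real^'n \<Rightarrow> real)
     \<Rightarrow> (real^'n \<Rightarrow> real \<Rightarrow> real) \<Rightarrow> bool" where
  "potential_hyp \<epsilon>0 V0 V1 RV \<longleftrightarrow>
   0 < \<epsilon>0 \<and>
   C_inf_on UNIV V0 \<and> C_inf_on UNIV V1 \<and>
   C_inf_on (UNIV \<times> {0<..\<epsilon>0}) (\<lambda>(x, \<epsilon>). RV x \<epsilon>) \<and>
   (\<forall>K. compact K \<longrightarrow> (\<exists>C. \<forall>\<epsilon> x. 0 < \<epsilon> \<and> \<epsilon> \<le> \<epsilon>0 \<and> x \<in> K \<longrightarrow> \<bar>RV x \<epsilon>\<bar> \<le> C * \<epsilon>\<^sup>2)) \<and>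
   (\<forall>\<epsilon>. 0 < \<epsilon> \<and> \<epsilon> \<le> \<epsilon>0 \<longrightarrow> (\<exists>C N. \<forall>x\<in>lattice \<epsilon>.
        \<bar>V0 x + \<epsilon> * V1 x + RV x \<epsilon>\<bar> \<le> C * (1 + norm x) ^ N)) \<and>
   (\<exists>C R. C > 0 \<and> (\<forall>\<epsilon> x. 0 < \<epsilon> \<and> \<epsilon> \<le> \<epsilon>0 \<and> x \<in> lattice \<epsilon> \<and> norm x \<ge> R \<longrightarrow>
        V0 x + \<epsilon> * V1 x + RV x \<epsilon> > C)) \<and>
   (\<forall>x. V0 x \<ge> 0) \<and>
   finite {x. V0 x = 0} \<and>
   (\<forall>x. V0 x = 0 \<longrightarrow> pos_def_hessian V0 x)"

text \<open>t_0(x,xi) = sum_gamma a0_gamma(x) e^{-i gamma xi/eps}, gamma = eps k.\<close>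
definition t0 :: "(int^'n \<Rightarrow> real^'n \<Rightarrow> real) \<Rightarrow> real^'n \<Rightarrow> real^'n \<Rightarrow> complex" where
  "t0 a0 x \<xi> = (\<Sum>\<^sub>\<infinity>k. complex_of_real (a0 k x) * cis (- (iv k \<bullet> \<xi>)))"

definition symbol_hyp :: "(int^'n \<Rightarrow> real^'n \<Rightarrow> real) \<Rightarrow> (real^'n \<Rightarrow> real) \<Rightarrow> bool" where
  "symbol_hyp a0 V0 \<longleftrightarrow> (\<forall>x \<xi>. V0 x = 0 \<and> \<not> (\<exists>k. \<xi> = (2 * pi) *\<^sub>R iv k) \<longrightarrow>
      t0 a0 x \<xi> \<in> \<real> \<and> Re (t0 a0 x \<xi>) > 0)"

end

theory Submission
  imports Defs
begin

(* Cover the lattice by the translates y + Q of the cube Q = {0, ..., N-1}^d (in lattice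
   coordinates) and cut phi off to each of them.  A cut-off piece is supported in the R-ball
   around each of its points, because its diameter is at most eps d N < R; hence its energy is
   at least the |phi|^2-average of Lambda_R over its support.  Every lattice point lies in exactly
   N^d translates, so summing over the translates reproduces N^d <H phi, phi>, up to the hopping
   terms a_gamma that leave a translate: a pair of points at lattice distance |k| is separated by
   at most d |k| N^(d-1) translates, and the Schur test bounds this error by d K N^(d-1) ||phi||^2,
   where K bounds the first moments sum_gamma |a_gamma(x)| (1 + |gamma/eps|).  These are finite by
   the weighted l^2 bounds (iv).  Dividing by N^d, the loss d K / N is below delta once N is large.
   Only the symmetry (iii) (for the column sums in the Schur test), the bounds (iv) and the
   polynomial bound on V_eps enter. *)

lemma iv_add: "iv (j + k) = iv j + iv k"
  by (simp add: iv_def vec_eq_iff)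

lemma iv_diff: "iv (j - k) = iv j - iv k"
  by (simp add: iv_def vec_eq_iff)

lemma iv_0 [simp]: "iv 0 = 0"
  by (simp add: iv_def vec_eq_iff)

lemma iv_component [simp]: "iv k $ i = of_int (k $ i)"
  by (simp add: iv_def)

lemma inj_iv: "inj iv"
  by (auto simp: inj_on_def iv_def vec_eq_iff)

lemma abs_component_le_norm_iv: "\<bar>real_of_int (k $ i)\<bar> \<le> norm (iv k)"
  using component_le_norm_cart[of "iv k" i] by simp

lemma norm_iv_ge_1: "k \<noteq> 0 \<Longrightarrow> 1 \<le> norm (iv k)"
  by (metis abs_component_le_norm_iv of_int_1_le_iff order.trans vec_eq_iff zero_index
      zero_less_abs_iff int_one_le_iff_zero_less of_int_abs)

lemma norm_iv_le:
  assumes "\<And>i. \<bar>real_of_int (k $ i)\<bar> \<le> m"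
  shows "norm (iv (k::int^'n::finite)) \<le> real CARD('n) * m"
proof -
  have "norm (iv k) \<le> (\<Sum>i\<in>UNIV. \<bar>iv k $ i\<bar>)" by (rule norm_le_l1_cart)
  also have "\<dots> \<le> (\<Sum>i\<in>(UNIV::'n set). m)" by (rule sum_mono) (simp add: assms)
  finally show ?thesis by simp
qed

definition lattice_point :: "real \<Rightarrow> int^'n \<Rightarrow> real^'n" where
  "lattice_point \<epsilon> j = \<epsilon> *\<^sub>R iv j"

lemma lattice_eq_range: "lattice \<epsilon> = range (lattice_point \<epsilon>)"
  by (auto simp: lattice_def lattice_point_def)

lemma lattice_point_add_iv: "lattice_point \<epsilon> j + \<epsilon> *\<^sub>R iv k = lattice_point \<epsilon> (j + k)"
  by (simp add: lattice_point_def iv_add scaleR_add_right)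

lemma lattice_point_diff: "lattice_point \<epsilon> j - lattice_point \<epsilon> j' = \<epsilon> *\<^sub>R iv (j - j')"
  by (simp add: lattice_point_def iv_diff scaleR_diff_right)

lemma inj_lattice_point: "\<epsilon> \<noteq> 0 \<Longrightarrow> inj (lattice_point \<epsilon>)"
  using inj_iv by (auto simp: inj_on_def lattice_point_def)

definition coord_support :: "real \<Rightarrow> (real^'n \<Rightarrow> real) \<Rightarrow> (int^'n) set" where
  "coord_support \<epsilon> \<phi> = {j. \<phi> (lattice_point \<epsilon> j) \<noteq> 0}"

lemma
  assumes "\<epsilon> \<noteq> 0" and "\<phi> \<in> c0 \<epsilon> D"
  shows finite_coord_support: "finite (coord_support \<epsilon> \<phi>)"
    and c0_support_subset: "\<phi> x \<noteq> 0 \<Longrightarrow> x \<in> lattice_point \<epsilon> ` coord_support \<epsilon> \<phi>"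
    and coord_support_subset: "j \<in> coord_support \<epsilon> \<phi> \<Longrightarrow> lattice_point \<epsilon> j \<in> D"
proof -
  have fin: "finite {x. \<phi> x \<noteq> 0}" and sub: "{x. \<phi> x \<noteq> 0} \<subseteq> D \<inter> lattice \<epsilon>"
    using assms(2) by (auto simp: c0_def)
  have "coord_support \<epsilon> \<phi> = lattice_point \<epsilon> -` {x. \<phi> x \<noteq> 0}"
    by (auto simp: coord_support_def)
  then show "finite (coord_support \<epsilon> \<phi>)"
    using finite_vimageI[OF fin inj_lattice_point[OF assms(1)]] by simp
  show "\<phi> x \<noteq> 0 \<Longrightarrow> x \<in> lattice_point \<epsilon> ` coord_support \<epsilon> \<phi>"
    using sub by (auto simp: lattice_eq_range coord_support_def)
  show "j \<in> coord_support \<epsilon> \<phi> \<Longrightarrow> lattice_point \<epsilon> j \<in> D"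
    using sub by (auto simp: coord_support_def)
qed

lemma infsum_lattice_eq_sum:
  assumes "\<epsilon> \<noteq> 0" "finite S" "\<And>x. g x \<noteq> 0 \<Longrightarrow> x \<in> lattice_point \<epsilon> ` S"
  shows "(\<Sum>\<^sub>\<infinity>x\<in>lattice \<epsilon>. g x) = (\<Sum>j\<in>S. g (lattice_point \<epsilon> j))"
proof -
  have "(\<Sum>\<^sub>\<infinity>x\<in>lattice \<epsilon>. g x) = (\<Sum>\<^sub>\<infinity>x\<in>lattice_point \<epsilon> ` S. g x)"
    by (rule infsum_cong_neutral) (use assms(3) in \<open>auto simp: lattice_eq_range\<close>)
  also have "\<dots> = (\<Sum>j\<in>S. g (lattice_point \<epsilon> j))"
    using assms(2) inj_on_subset[OF inj_lattice_point[OF assms(1)], of S] by (simp add: sum.reindex)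
  finally show ?thesis .
qed

lemma lat_inner_eq_sum:
  assumes "\<epsilon> \<noteq> 0" "finite S" "\<And>x. v x \<noteq> 0 \<Longrightarrow> x \<in> lattice_point \<epsilon> ` S"
  shows "lat_inner \<epsilon> u v = (\<Sum>j\<in>S. u (lattice_point \<epsilon> j) * v (lattice_point \<epsilon> j))"
  unfolding lat_inner_def by (rule infsum_lattice_eq_sum) (use assms in auto)

lemma Top_lattice_point_eq_sum:
  assumes e: "\<epsilon> \<noteq> 0" and S: "finite S" and supp: "\<And>x. u x \<noteq> 0 \<Longrightarrow> x \<in> lattice_point \<epsilon> ` S"
  shows "Top a \<epsilon> u (lattice_point \<epsilon> j)
    = (\<Sum>j'\<in>S. a (j' - j) (lattice_point \<epsilon> j) \<epsilon> * u (lattice_point \<epsilon> j'))"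
proof -
  let ?x = "lattice_point \<epsilon> j"
  have "Top a \<epsilon> u ?x = (\<Sum>\<^sub>\<infinity>k\<in>(\<lambda>j'. j' - j) ` S. a k ?x \<epsilon> * u (?x + \<epsilon> *\<^sub>R iv k))"
    unfolding Top_def
  proof (rule infsum_cong_neutral)
    fix k assume "k \<in> UNIV - (\<lambda>j'. j' - j) ` S"
    then have "j + k \<notin> S" by (metis DiffD2 add_diff_cancel_left' image_eqI)
    then have "lattice_point \<epsilon> (j + k) \<notin> lattice_point \<epsilon> ` S"
      using inj_lattice_point[OF e] by (auto simp: inj_on_def)
    then show "a k ?x \<epsilon> * u (?x + \<epsilon> *\<^sub>R iv k) = 0"
      using supp by (metis lattice_point_add_iv mult_eq_0_iff)
  qed auto
  also have "\<dots> = (\<Sum>j'\<in>S. a (j' - j) ?x \<epsilon> * u (lattice_point \<epsilon> j'))"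
    using S by (simp add: sum.reindex inj_on_def lattice_point_add_iv)
  finally show ?thesis .
qed

lemma lat_inner_Hop_eq_sum:
  assumes e: "\<epsilon> \<noteq> 0" and S: "finite S" and supp: "\<And>x. u x \<noteq> 0 \<Longrightarrow> x \<in> lattice_point \<epsilon> ` S"
  shows "lat_inner \<epsilon> (Hop a V \<epsilon> u) u =
    (\<Sum>j\<in>S. \<Sum>j'\<in>S. a (j' - j) (lattice_point \<epsilon> j) \<epsilon> * u (lattice_point \<epsilon> j') * u (lattice_point \<epsilon> j))
    + (\<Sum>j\<in>S. V (lattice_point \<epsilon> j) * (u (lattice_point \<epsilon> j))\<^sup>2)"
proof -
  have "lat_inner \<epsilon> (Hop a V \<epsilon> u) u
      = (\<Sum>j\<in>S. Hop a V \<epsilon> u (lattice_point \<epsilon> j) * u (lattice_point \<epsilon> j))"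
    by (rule lat_inner_eq_sum[OF assms])
  then show ?thesis
    by (simp add: Hop_def Top_lattice_point_eq_sum[OF assms] sum.distrib sum_distrib_left sum_distrib_right
        power2_eq_square algebra_simps)
qed

lemma lat_inner_self_pos:
  assumes "\<epsilon> \<noteq> 0" "\<phi> \<in> c0 \<epsilon> D" "\<phi> \<noteq> (\<lambda>_. 0)"
  shows "0 < lat_inner \<epsilon> \<phi> \<phi>"
proof -
  let ?S = "coord_support \<epsilon> \<phi>"
  obtain x where "\<phi> x \<noteq> 0" using assms(3) by auto
  then obtain j where j: "j \<in> ?S" using c0_support_subset[OF assms(1,2)] by blast
  have "lat_inner \<epsilon> \<phi> \<phi> = (\<Sum>j\<in>?S. \<phi> (lattice_point \<epsilon> j) * \<phi> (lattice_point \<epsilon> j))"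
    by (rule lat_inner_eq_sum[OF assms(1) finite_coord_support c0_support_subset]) (use assms in auto)
  also have "\<dots> > 0"
    by (rule sum_pos2[OF finite_coord_support[OF assms(1,2)] j])
      (use j in \<open>auto simp: coord_support_def zero_less_mult_iff\<close>)
  finally show ?thesis .
qed

lemma schur_test:
  fixes f :: "'a \<Rightarrow> real"
  assumes S: "finite S" and gh: "\<And>j j'. j \<in> S \<Longrightarrow> j' \<in> S \<Longrightarrow> \<bar>g j j'\<bar> \<le> h j j'"
    and row: "\<And>j. j \<in> S \<Longrightarrow> (\<Sum>j'\<in>S. h j j') \<le> L"
    and col: "\<And>j'. j' \<in> S \<Longrightarrow> (\<Sum>j\<in>S. h j j') \<le> L"
  shows "\<bar>\<Sum>j\<in>S. \<Sum>j'\<in>S. g j j' * f j' * f j\<bar> \<le> L * (\<Sum>j\<in>S. (f j)\<^sup>2)"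
proof -
  have pointwise: "\<bar>g j j' * f j' * f j\<bar> \<le> h j j' * (f j)\<^sup>2 / 2 + h j j' * (f j')\<^sup>2 / 2"
    if "j \<in> S" "j' \<in> S" for j j'
  proof -
    have "\<bar>f j' * f j\<bar> \<le> ((f j)\<^sup>2 + (f j')\<^sup>2) / 2"
      using sum_squares_bound[of "\<bar>f j\<bar>" "\<bar>f j'\<bar>"] by (simp add: abs_mult mult.commute)
    then have "\<bar>g j j'\<bar> * \<bar>f j' * f j\<bar> \<le> h j j' * (((f j)\<^sup>2 + (f j')\<^sup>2) / 2)"
      using gh[OF that] by (intro mult_mono) auto
    then show ?thesis by (simp add: abs_mult algebra_simps add_divide_distrib)
  qed
  have "\<bar>\<Sum>j\<in>S. \<Sum>j'\<in>S. g j j' * f j' * f j\<bar> \<le> (\<Sum>j\<in>S. \<Sum>j'\<in>S. \<bar>g j j' * f j' * f j\<bar>)"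
    by (rule order.trans[OF sum_abs]) (intro sum_mono sum_abs)
  also have "\<dots> \<le> (\<Sum>j\<in>S. \<Sum>j'\<in>S. h j j' * (f j)\<^sup>2 / 2 + h j j' * (f j')\<^sup>2 / 2)"
    by (intro sum_mono pointwise)
  also have "\<dots> = (\<Sum>j\<in>S. (\<Sum>j'\<in>S. h j j') * (f j)\<^sup>2) / 2 + (\<Sum>j'\<in>S. (\<Sum>j\<in>S. h j j') * (f j')\<^sup>2) / 2"
  proof -
    have "(\<Sum>j\<in>S. \<Sum>j'\<in>S. h j j' * (f j')\<^sup>2 / 2) = (\<Sum>j'\<in>S. (\<Sum>j\<in>S. h j j') * (f j')\<^sup>2) / 2"
      by (subst sum.swap) (simp add: sum_divide_distrib sum_distrib_right)
    then show ?thesis by (simp add: sum.distrib sum_divide_distrib sum_distrib_right)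
  qed
  also have "\<dots> \<le> (\<Sum>j\<in>S. L * (f j)\<^sup>2) / 2 + (\<Sum>j'\<in>S. L * (f j')\<^sup>2) / 2"
    by (intro add_mono divide_right_mono sum_mono mult_right_mono row col) auto
  also have "\<dots> = L * (\<Sum>j\<in>S. (f j)\<^sup>2)"
    by (simp add: sum_distrib_left)
  finally show ?thesis .
qed

definition first_moment_bound :: "(int^'n \<Rightarrow> real^'n \<Rightarrow> real \<Rightarrow> real) \<Rightarrow> real \<Rightarrow> real \<Rightarrow> bool" where
  "first_moment_bound a \<epsilon> K \<longleftrightarrow>
     (\<forall>x F. finite F \<longrightarrow> (\<Sum>k\<in>F. \<bar>a k x \<epsilon>\<bar> * (1 + norm (iv k))) \<le> K)"

definition hopping_symmetric :: "(int^'n \<Rightarrow> real^'n \<Rightarrow> real \<Rightarrow> real) \<Rightarrow> real \<Rightarrow> bool" where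
  "hopping_symmetric a \<epsilon> \<longleftrightarrow> (\<forall>k x. a k x \<epsilon> = a (- k) (x + \<epsilon> *\<^sub>R iv k) \<epsilon>)"

lemma first_moment_row_sum_le:
  assumes "first_moment_bound a \<epsilon> K" "finite S"
  shows "(\<Sum>j'\<in>S. \<bar>a (j' - j) x \<epsilon>\<bar> * (1 + norm (iv (j' - j)))) \<le> K"
proof -
  have "(\<Sum>j'\<in>S. \<bar>a (j' - j) x \<epsilon>\<bar> * (1 + norm (iv (j' - j))))
      = (\<Sum>k\<in>(\<lambda>j'. j' - j) ` S. \<bar>a k x \<epsilon>\<bar> * (1 + norm (iv k)))"
    by (subst sum.reindex) (auto simp: inj_on_def)
  also have "\<dots> \<le> K" using assms by (simp add: first_moment_bound_def)
  finally show ?thesis .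
qed

lemma abs_hopping_sum_le:
  assumes K: "first_moment_bound a \<epsilon> K"
    and sym: "hopping_symmetric a \<epsilon>"
    and S: "finite S" and c: "0 \<le> c" and e_bound: "\<And>j j'. \<bar>e j j'\<bar> \<le> c * (1 + norm (iv (j' - j)))"
  shows "\<bar>\<Sum>j\<in>S. \<Sum>j'\<in>S. a (j' - j) (lattice_point \<epsilon> j) \<epsilon> * e j j' * f j' * f j\<bar>
    \<le> c * K * (\<Sum>j\<in>S. (f j)\<^sup>2)"
proof (rule schur_test[OF S])
  let ?h = "\<lambda>j j'. c * (\<bar>a (j' - j) (lattice_point \<epsilon> j) \<epsilon>\<bar> * (1 + norm (iv (j' - j))))"
  show "\<bar>a (j' - j) (lattice_point \<epsilon> j) \<epsilon> * e j j'\<bar> \<le> ?h j j'" for j j'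
    using mult_left_mono[OF e_bound[of j j'], of "\<bar>a (j' - j) (lattice_point \<epsilon> j) \<epsilon>\<bar>"]
    by (simp add: abs_mult mult_ac)
  show "(\<Sum>j'\<in>S. ?h j j') \<le> c * K" for j
    unfolding sum_distrib_left[symmetric]
    by (intro mult_left_mono first_moment_row_sum_le[OF K S] c)
  have "a (j' - j) (lattice_point \<epsilon> j) \<epsilon> = a (j - j') (lattice_point \<epsilon> j') \<epsilon>" for j j'
  proof -
    have "a (j' - j) (lattice_point \<epsilon> j) \<epsilon>
        = a (- (j' - j)) (lattice_point \<epsilon> j + \<epsilon> *\<^sub>R iv (j' - j)) \<epsilon>"
      using sym unfolding hopping_symmetric_def by blast
    then show ?thesis by (simp add: lattice_point_add_iv)
  qed
  then have "(\<Sum>j\<in>S. ?h j j')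
      = c * (\<Sum>j\<in>S. \<bar>a (j - j') (lattice_point \<epsilon> j') \<epsilon>\<bar> * (1 + norm (iv (j - j'))))" for j'
    by (simp add: sum_distrib_left iv_diff norm_minus_commute)
  then show "(\<Sum>j\<in>S. ?h j j') \<le> c * K" for j'
    using mult_left_mono[OF first_moment_row_sum_le[OF K S] c] by simp
qed

section \<open>Local ground-state energies\<close>

text \<open>\<open>Inf\<close> of a real set that is not bounded below is unspecified, so \<open>LambdaR\<close> is a lower
  bound for the Rayleigh quotients only once these are shown to be bounded below.\<close>

lemma bdd_below_Rayleigh_quotients:
  assumes e: "\<epsilon> \<noteq> 0" and K: "first_moment_bound a \<epsilon> K"
    and sym: "hopping_symmetric a \<epsilon>"
    and V: "bdd_below (V ` ball_lat \<epsilon> x R)"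
  shows "bdd_below {lat_inner \<epsilon> (Hop a V \<epsilon> \<phi>) \<phi> / lat_inner \<epsilon> \<phi> \<phi> | \<phi>.
    \<phi> \<in> c0 \<epsilon> (ball_lat \<epsilon> x R) \<and> \<phi> \<noteq> (\<lambda>_. 0)}"
proof -
  obtain M where M: "\<And>y. y \<in> ball_lat \<epsilon> x R \<Longrightarrow> M \<le> V y"
    using V by (auto simp: bdd_below_def)
  have "M - K \<le> lat_inner \<epsilon> (Hop a V \<epsilon> \<phi>) \<phi> / lat_inner \<epsilon> \<phi> \<phi>"
    if \<phi>: "\<phi> \<in> c0 \<epsilon> (ball_lat \<epsilon> x R)" "\<phi> \<noteq> (\<lambda>_. 0)" for \<phi>
  proof -
    let ?S = "coord_support \<epsilon> \<phi>" and ?f = "\<lambda>j. \<phi> (lattice_point \<epsilon> j)"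
    note S = finite_coord_support[OF e \<phi>(1)] and supp = c0_support_subset[OF e \<phi>(1)]
    have W: "lat_inner \<epsilon> \<phi> \<phi> = (\<Sum>j\<in>?S. (?f j)\<^sup>2)"
      using lat_inner_eq_sum[OF e S supp] by (simp add: power2_eq_square)
    have "\<bar>\<Sum>j\<in>?S. \<Sum>j'\<in>?S. a (j' - j) (lattice_point \<epsilon> j) \<epsilon> * ?f j' * ?f j\<bar>
        \<le> K * (\<Sum>j\<in>?S. (?f j)\<^sup>2)"
      using abs_hopping_sum_le[OF K sym S zero_le_one, where e="\<lambda>_ _. 1" and f="?f"] by simp
    then have kinetic: "- (K * (\<Sum>j\<in>?S. (?f j)\<^sup>2))
        \<le> (\<Sum>j\<in>?S. \<Sum>j'\<in>?S. a (j' - j) (lattice_point \<epsilon> j) \<epsilon> * ?f j' * ?f j)"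
      by (simp only: abs_le_iff) linarith
    have potential: "(\<Sum>j\<in>?S. M * (?f j)\<^sup>2) \<le> (\<Sum>j\<in>?S. V (lattice_point \<epsilon> j) * (?f j)\<^sup>2)"
      using M coord_support_subset[OF e \<phi>(1)] by (intro sum_mono mult_right_mono) auto
    have "(M - K) * lat_inner \<epsilon> \<phi> \<phi> = (\<Sum>j\<in>?S. M * (?f j)\<^sup>2) - K * (\<Sum>j\<in>?S. (?f j)\<^sup>2)"
      by (simp add: W sum_distrib_left left_diff_distrib sum_subtractf)
    then have "(M - K) * lat_inner \<epsilon> \<phi> \<phi> \<le> lat_inner \<epsilon> (Hop a V \<epsilon> \<phi>) \<phi>"
      using kinetic potential lat_inner_Hop_eq_sum[where u=\<phi> and a=a and V=V, OF e S supp] by linarith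
    then show ?thesis using lat_inner_self_pos[OF e \<phi>] by (simp add: le_divide_eq)
  qed
  then show ?thesis by (intro bdd_belowI[of _ "M - K"]) blast
qed

lemma LambdaR_mult_le_lat_inner_Hop:
  assumes e: "\<epsilon> \<noteq> 0" and K: "first_moment_bound a \<epsilon> K"
    and sym: "hopping_symmetric a \<epsilon>"
    and V: "bdd_below (V ` ball_lat \<epsilon> x R)"
    and \<psi>: "\<psi> \<in> c0 \<epsilon> (ball_lat \<epsilon> x R)" "\<psi> \<noteq> (\<lambda>_. 0)"
  shows "LambdaR a V \<epsilon> R x * lat_inner \<epsilon> \<psi> \<psi> \<le> lat_inner \<epsilon> (Hop a V \<epsilon> \<psi>) \<psi>"
proof -
  have "LambdaR a V \<epsilon> R x \<le> lat_inner \<epsilon> (Hop a V \<epsilon> \<psi>) \<psi> / lat_inner \<epsilon> \<psi> \<psi>"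
    unfolding LambdaR_def
    by (rule cInf_lower[OF _ bdd_below_Rayleigh_quotients[OF e K sym V]]) (use \<psi> in blast)
  then show ?thesis using lat_inner_self_pos[OF e \<psi>] by (simp add: le_divide_eq)
qed

lemma sum_LambdaR_le_lat_inner_Hop:
  assumes e: "\<epsilon> \<noteq> 0" and K: "first_moment_bound a \<epsilon> K"
    and sym: "hopping_symmetric a \<epsilon>"
    and V: "\<And>x. bdd_below (V ` ball_lat \<epsilon> x R)"
    and S: "finite S" and supp: "\<And>x. u x \<noteq> 0 \<Longrightarrow> x \<in> lattice_point \<epsilon> ` S"
    and small: "\<And>j. j \<in> S \<Longrightarrow> u (lattice_point \<epsilon> j) \<noteq> 0
                  \<Longrightarrow> u \<in> c0 \<epsilon> (ball_lat \<epsilon> (lattice_point \<epsilon> j) R)"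
  shows "(\<Sum>j\<in>S. LambdaR a V \<epsilon> R (lattice_point \<epsilon> j) * (u (lattice_point \<epsilon> j))\<^sup>2)
    \<le> lat_inner \<epsilon> (Hop a V \<epsilon> u) u"
proof (cases "u = (\<lambda>_. 0)")
  case True
  then show ?thesis by (simp add: lat_inner_Hop_eq_sum[OF e S supp])
next
  case False
  let ?\<Lambda> = "\<lambda>j. LambdaR a V \<epsilon> R (lattice_point \<epsilon> j)" and ?w = "\<lambda>j. (u (lattice_point \<epsilon> j))\<^sup>2"
    and ?Q = "lat_inner \<epsilon> (Hop a V \<epsilon> u) u" and ?W = "lat_inner \<epsilon> u u"
  have W: "?W = (\<Sum>j\<in>S. ?w j)"
    using lat_inner_eq_sum[OF e S supp] by (simp add: power2_eq_square)
  obtain x where "u x \<noteq> 0" using False by auto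
  then obtain j0 where j0: "j0 \<in> S" "u (lattice_point \<epsilon> j0) \<noteq> 0" using supp by blast
  have W_pos: "0 < ?W" by (rule lat_inner_self_pos[OF e small[OF j0] False])
  have "?w j * (?\<Lambda> j * ?W) \<le> ?w j * ?Q" if "j \<in> S" for j
    using LambdaR_mult_le_lat_inner_Hop[OF e K sym V small[OF that] False]
    by (cases "u (lattice_point \<epsilon> j) = 0") (auto intro: mult_left_mono)
  then have "(\<Sum>j\<in>S. ?w j * (?\<Lambda> j * ?W)) \<le> (\<Sum>j\<in>S. ?w j * ?Q)"
    by (rule sum_mono)
  then have "(\<Sum>j\<in>S. ?\<Lambda> j * ?w j) * ?W \<le> ?Q * ?W"
    by (simp add: W sum_distrib_left sum_distrib_right mult_ac)
  then show ?thesis using W_pos by simp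
qed

lemma bij_betw_vec_nth_box: "bij_betw vec_nth {k::'a^'n::finite. \<forall>i. k $ i \<in> T i} (PiE UNIV T)"
  by (rule bij_betwI[of _ _ _ vec_lambda]) (auto simp: PiE_def extensional_def vec_eq_iff Pi_def)

lemma finite_box: "(\<And>i. finite (T i)) \<Longrightarrow> finite {k::'a^'n::finite. \<forall>i. k $ i \<in> T i}"
  by (simp add: bij_betw_finite[OF bij_betw_vec_nth_box] finite_PiE)

lemma card_box: "card {k::'a^'n::finite. \<forall>i. k $ i \<in> T i} = (\<Prod>i\<in>UNIV. card (T i))"
  using bij_betw_same_card[OF bij_betw_vec_nth_box] by (simp add: card_PiE)

lemma sum_prod_box:
  fixes g :: "'n::finite \<Rightarrow> 'a \<Rightarrow> real"
  assumes "\<And>i. finite (T i)"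
  shows "(\<Sum>k\<in>{k::'a^'n. \<forall>i. k $ i \<in> T i}. \<Prod>i\<in>UNIV. g i (k $ i)) = (\<Prod>i\<in>UNIV. \<Sum>t\<in>T i. g i t)"
proof -
  have "(\<Sum>k\<in>{k::'a^'n. \<forall>i. k $ i \<in> T i}. \<Prod>i\<in>UNIV. g i (k $ i)) = (\<Sum>h\<in>PiE UNIV T. \<Prod>i\<in>UNIV. g i (h i))"
    using sum.reindex_bij_betw[OF bij_betw_vec_nth_box, of "\<lambda>h. \<Prod>i\<in>UNIV. g i (h i)"] by simp
  also have "\<dots> = (\<Prod>i\<in>UNIV. \<Sum>t\<in>T i. g i t)"
    by (rule prod_sum_PiE[symmetric]) (use assms in auto)
  finally show ?thesis .
qed

definition cube :: "nat \<Rightarrow> (int^'n::finite) set" where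
  "cube N = {c. \<forall>i. c $ i \<in> {0..<int N}}"

lemma finite_cube: "finite (cube N)"
  unfolding cube_def by (rule finite_box) simp

lemma card_cube: "card (cube N :: (int^'n::finite) set) = N ^ CARD('n)"
  unfolding cube_def card_box by simp

lemma card_interval_shift_out_le:
  "card {t \<in> {0..<int N}. t + s \<notin> {0..<int N}} \<le> nat \<bar>s\<bar>"
proof (cases "s \<ge> 0")
  case True
  have "card {t \<in> {0..<int N}. t + s \<notin> {0..<int N}} \<le> card {int N - s..<int N}"
    by (rule card_mono) (use True in auto)
  then show ?thesis using True by simp
next
  case False
  have "card {t \<in> {0..<int N}. t + s \<notin> {0..<int N}} \<le> card {0..<- s}"
    by (rule card_mono) (use False in auto)
  then show ?thesis using False by simp
qed

lemma card_cube_shift_out_coord_le: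
  fixes k :: "int^'n::finite"
  shows "card {c \<in> cube N. c $ i + k $ i \<notin> {0..<int N}} \<le> nat \<bar>k $ i\<bar> * N ^ (CARD('n) - 1)"
proof -
  define T where "T l = (if l = i then {t \<in> {0..<int N}. t + k $ i \<notin> {0..<int N}} else {0..<int N})"
    for l
  have "{c \<in> cube N. c $ i + k $ i \<notin> {0..<int N}} = {c::int^'n. \<forall>l. c $ l \<in> T l}"
    by (auto simp: cube_def T_def split: if_splits)
  also have "card \<dots> = card (T i) * (\<Prod>l\<in>UNIV - {i}. card (T l))"
    unfolding card_box by (rule prod.remove) simp_all
  also have "(\<Prod>l\<in>UNIV - {i}. card (T l)) = N ^ (CARD('n) - 1)"
    by (simp add: T_def card_Diff_singleton)
  finally show ?thesis
    using card_interval_shift_out_le[of N "k $ i"] by (simp add: T_def mult_le_mono1)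
qed

lemma card_cube_shift_out_le:
  fixes k :: "int^'n::finite"
  shows "real (card {c \<in> cube N. c + k \<notin> cube N})
    \<le> real CARD('n) * norm (iv k) * real N ^ (CARD('n) - 1)"
proof -
  have "{c \<in> cube N. c + k \<notin> cube N} = (\<Union>i. {c \<in> cube N. c $ i + k $ i \<notin> {0..<int N}})"
    by (auto simp: cube_def)
  then have "card {c \<in> cube N. c + k \<notin> cube N} \<le> (\<Sum>i\<in>UNIV. card {c \<in> cube N. c $ i + k $ i \<notin> {0..<int N}})"
    using card_UN_le[of UNIV "\<lambda>i. {c \<in> cube N. c $ i + k $ i \<notin> {0..<int N}}"] by simp
  then have "real (card {c \<in> cube N. c + k \<notin> cube N})
      \<le> (\<Sum>i\<in>UNIV. real (card {c \<in> cube N. c $ i + k $ i \<notin> {0..<int N}}))"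
    by (simp only: of_nat_le_iff flip: of_nat_sum)
  also have "\<dots> \<le> (\<Sum>i\<in>(UNIV::'n set). norm (iv k) * real N ^ (CARD('n) - 1))"
  proof (rule sum_mono)
    fix i
    have "real (card {c \<in> cube N. c $ i + k $ i \<notin> {0..<int N}})
        \<le> real (nat \<bar>k $ i\<bar> * N ^ (CARD('n) - 1))"
      using card_cube_shift_out_coord_le[of N i k] by (simp only: of_nat_le_iff)
    also have "\<dots> = \<bar>real_of_int (k $ i)\<bar> * real N ^ (CARD('n) - 1)"
      by simp
    also have "\<dots> \<le> norm (iv k) * real N ^ (CARD('n) - 1)"
      by (intro mult_right_mono abs_component_le_norm_iv) simp
    finally show "real (card {c \<in> cube N. c $ i + k $ i \<notin> {0..<int N}}) \<le> \<dots>" .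
  qed
  finally show ?thesis by simp
qed

section \<open>Localization by averaging over translated cubes\<close>

definition lattice_restrict :: "real \<Rightarrow> (int^'n) set \<Rightarrow> (real^'n \<Rightarrow> real) \<Rightarrow> real^'n \<Rightarrow> real" where
  "lattice_restrict \<epsilon> C \<phi> x = (if x \<in> lattice_point \<epsilon> ` C then \<phi> x else 0)"

lemma lattice_restrict_translate_lattice_point:
  assumes "\<epsilon> \<noteq> 0"
  shows "lattice_restrict \<epsilon> ((+) y ` C) \<phi> (lattice_point \<epsilon> j) = of_bool (j - y \<in> C) * \<phi> (lattice_point \<epsilon> j)"
proof -
  have "lattice_point \<epsilon> j \<in> lattice_point \<epsilon> ` (+) y ` C \<longleftrightarrow> j \<in> (+) y ` C"
    using inj_lattice_point[OF assms] by (auto simp: inj_on_def)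
  also have "\<dots> \<longleftrightarrow> j - y \<in> C" by (force simp: algebra_simps)
  finally show ?thesis by (simp add: lattice_restrict_def)
qed

lemma lattice_restrict_in_c0_ball:
  assumes \<phi>: "\<phi> \<in> c0 \<epsilon> UNIV" and j: "j \<in> C"
    and diam: "\<And>c c'. c \<in> C \<Longrightarrow> c' \<in> C \<Longrightarrow> norm (lattice_point \<epsilon> c - lattice_point \<epsilon> c') < R"
  shows "lattice_restrict \<epsilon> C \<phi> \<in> c0 \<epsilon> (ball_lat \<epsilon> (lattice_point \<epsilon> j) R)"
proof -
  have "{x. lattice_restrict \<epsilon> C \<phi> x \<noteq> 0} \<subseteq> {x. \<phi> x \<noteq> 0}" by (auto simp: lattice_restrict_def)
  moreover have "{x. lattice_restrict \<epsilon> C \<phi> x \<noteq> 0} \<subseteq> ball_lat \<epsilon> (lattice_point \<epsilon> j) R"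
    using diam j by (auto simp: lattice_restrict_def ball_lat_def lattice_eq_range split: if_splits)
  ultimately show ?thesis using \<phi> finite_subset by (fastforce simp: c0_def ball_lat_def)
qed

definition translates_meeting :: "'a::ab_group_add set \<Rightarrow> 'a set \<Rightarrow> 'a set" where
  "translates_meeting S C = (\<lambda>(j, c). j - c) ` (S \<times> C)"

lemma card_translates_containing:
  fixes C :: "'a::ab_group_add set"
  assumes "j \<in> S"
  shows "card {y \<in> translates_meeting S C. j - y \<in> C \<and> j' - y \<in> C} = card {c \<in> C. c + (j' - j) \<in> C}"
proof -
  have "{y \<in> translates_meeting S C. j - y \<in> C \<and> j' - y \<in> C} = (\<lambda>c. j - c) ` {c \<in> C. c + (j' - j) \<in> C}"
    using assms by (force simp: translates_meeting_def algebra_simps image_iff)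
  then show ?thesis by (simp add: card_image inj_on_def)
qed

lemma sum_translate_indicators:
  fixes C :: "'a::ab_group_add set"
  assumes "finite S" "finite C" "j \<in> S"
  shows "(\<Sum>y\<in>translates_meeting S C. of_bool (j' - y \<in> C) * of_bool (j - y \<in> C))
    = real (card C) - real (card {c \<in> C. c + (j' - j) \<notin> C})"
proof -
  let ?Y = "translates_meeting S C"
  have "finite ?Y" using assms by (simp add: translates_meeting_def)
  then have "(\<Sum>y\<in>?Y. of_bool (j' - y \<in> C) * of_bool (j - y \<in> C))
      = real (card {y \<in> ?Y. j - y \<in> C \<and> j' - y \<in> C})"
    by (simp add: Int_def conj_commute conj_left_commute)
  also have "\<dots> = real (card {c \<in> C. c + (j' - j) \<in> C})"
    by (simp add: card_translates_containing assms(3))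
  also have "\<dots> = real (card C) - real (card {c \<in> C. c + (j' - j) \<notin> C})"
  proof -
    have "C = {c \<in> C. c + (j' - j) \<in> C} \<union> {c \<in> C. c + (j' - j) \<notin> C}" by blast
    then have "card C = card {c \<in> C. c + (j' - j) \<in> C} + card {c \<in> C. c + (j' - j) \<notin> C}"
      by (metis (no_types, lifting) assms(2) card_Un_disjoint disjoint_iff finite_Un mem_Collect_eq)
    then show ?thesis by simp
  qed
  finally show ?thesis .
qed

lemma sum_quadratic_forms_cutoff:
  fixes \<theta> :: "'y \<Rightarrow> 'j \<Rightarrow> real"
  shows "(\<Sum>y\<in>Y. (\<Sum>j\<in>S. \<Sum>j'\<in>S. b j j' * (\<theta> y j' * f j') * (\<theta> y j * f j))
                 + (\<Sum>j\<in>S. v j * (\<theta> y j * f j)\<^sup>2))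
    = (\<Sum>j\<in>S. \<Sum>j'\<in>S. b j j' * f j' * f j * (\<Sum>y\<in>Y. \<theta> y j' * \<theta> y j))
      + (\<Sum>j\<in>S. v j * (f j)\<^sup>2 * (\<Sum>y\<in>Y. \<theta> y j * \<theta> y j))"
proof -
  have "(\<Sum>y\<in>Y. \<Sum>j\<in>S. \<Sum>j'\<in>S. b j j' * (\<theta> y j' * f j') * (\<theta> y j * f j))
      = (\<Sum>j\<in>S. \<Sum>j'\<in>S. \<Sum>y\<in>Y. b j j' * (\<theta> y j' * f j') * (\<theta> y j * f j))"
    by (subst sum.swap) (simp add: sum.swap[of _ Y])
  moreover have "(\<Sum>y\<in>Y. \<Sum>j\<in>S. v j * (\<theta> y j * f j)\<^sup>2) = (\<Sum>j\<in>S. \<Sum>y\<in>Y. v j * (\<theta> y j * f j)\<^sup>2)"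
    by (rule sum.swap)
  ultimately show ?thesis
    by (simp add: sum.distrib sum_distrib_left power2_eq_square mult_ac)
qed

text \<open>Every lattice point lies in \<open>card C\<close> of the translates \<open>y + C\<close>; the hopping term from
  \<open>j\<close> to \<open>j'\<close> is lost in the translates that contain \<open>j\<close> but not \<open>j'\<close>.\<close>

lemma lat_inner_Hop_translate_average:
  fixes C :: "(int^'n::finite) set" and \<phi> :: "real^'n \<Rightarrow> real"
  assumes e: "\<epsilon> \<noteq> 0" and C: "finite C" and \<phi>: "\<phi> \<in> c0 \<epsilon> UNIV"
  defines "S \<equiv> coord_support \<epsilon> \<phi>" and "f \<equiv> \<lambda>j. \<phi> (lattice_point \<epsilon> j)"
  shows "real (card C) * lat_inner \<epsilon> (Hop a V \<epsilon> \<phi>) \<phi>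
    = (\<Sum>y\<in>translates_meeting S C.
         lat_inner \<epsilon> (Hop a V \<epsilon> (lattice_restrict \<epsilon> ((+) y ` C) \<phi>)) (lattice_restrict \<epsilon> ((+) y ` C) \<phi>))
      + (\<Sum>j\<in>S. \<Sum>j'\<in>S. a (j' - j) (lattice_point \<epsilon> j) \<epsilon> * real (card {c \<in> C. c + (j' - j) \<notin> C})
           * f j' * f j)"
proof -
  let ?\<psi> = "\<lambda>y. lattice_restrict \<epsilon> ((+) y ` C) \<phi>" and ?\<theta> = "\<lambda>y j. of_bool (j - y \<in> C) :: real"
    and ?b = "\<lambda>j j'. a (j' - j) (lattice_point \<epsilon> j) \<epsilon>" and ?v = "\<lambda>j. V (lattice_point \<epsilon> j)"
  have S: "finite S" unfolding S_def by (rule finite_coord_support[OF e \<phi>])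
  have supp: "\<And>x. \<phi> x \<noteq> 0 \<Longrightarrow> x \<in> lattice_point \<epsilon> ` S"
    unfolding S_def by (rule c0_support_subset[OF e \<phi>])
  then have \<psi>_supp: "\<And>x. ?\<psi> y x \<noteq> 0 \<Longrightarrow> x \<in> lattice_point \<epsilon> ` S" for y
    by (auto simp: lattice_restrict_def split: if_splits)
  have Q\<psi>: "lat_inner \<epsilon> (Hop a V \<epsilon> (?\<psi> y)) (?\<psi> y)
      = (\<Sum>j\<in>S. \<Sum>j'\<in>S. ?b j j' * (?\<theta> y j' * f j') * (?\<theta> y j * f j)) + (\<Sum>j\<in>S. ?v j * (?\<theta> y j * f j)\<^sup>2)"
    for y
    by (simp only: lat_inner_Hop_eq_sum[OF e S \<psi>_supp] lattice_restrict_translate_lattice_point[OF e] f_def)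
  have Q\<phi>: "lat_inner \<epsilon> (Hop a V \<epsilon> \<phi>) \<phi> = (\<Sum>j\<in>S. \<Sum>j'\<in>S. ?b j j' * f j' * f j) + (\<Sum>j\<in>S. ?v j * (f j)\<^sup>2)"
    unfolding f_def by (rule lat_inner_Hop_eq_sum[OF e S supp])
  have "(\<Sum>y\<in>translates_meeting S C. lat_inner \<epsilon> (Hop a V \<epsilon> (?\<psi> y)) (?\<psi> y))
      = (\<Sum>j\<in>S. \<Sum>j'\<in>S. ?b j j' * f j' * f j * (real (card C) - real (card {c \<in> C. c + (j' - j) \<notin> C})))
        + (\<Sum>j\<in>S. ?v j * (f j)\<^sup>2 * real (card C))"
    unfolding Q\<psi> sum_quadratic_forms_cutoff
    by (simp add: sum_translate_indicators[OF S C] cong: sum.cong)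
  then show ?thesis
    unfolding Q\<phi> by (simp add: algebra_simps sum_subtractf sum_distrib_left sum_distrib_right)
qed

lemma sum_LambdaR_le_sum_restrictions:
  fixes C :: "(int^'n::finite) set" and \<phi> :: "real^'n \<Rightarrow> real"
  assumes e: "\<epsilon> \<noteq> 0" and K: "first_moment_bound a \<epsilon> K" and sym: "hopping_symmetric a \<epsilon>"
    and V: "\<And>x. bdd_below (V ` ball_lat \<epsilon> x R)" and C: "finite C"
    and diam: "\<And>c c'. c \<in> C \<Longrightarrow> c' \<in> C \<Longrightarrow> norm (lattice_point \<epsilon> c - lattice_point \<epsilon> c') < R"
    and \<phi>: "\<phi> \<in> c0 \<epsilon> UNIV"
  defines "S \<equiv> coord_support \<epsilon> \<phi>" and "f \<equiv> \<lambda>j. \<phi> (lattice_point \<epsilon> j)"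
  shows "real (card C) * (\<Sum>j\<in>S. LambdaR a V \<epsilon> R (lattice_point \<epsilon> j) * (f j)\<^sup>2)
    \<le> (\<Sum>y\<in>translates_meeting S C.
         lat_inner \<epsilon> (Hop a V \<epsilon> (lattice_restrict \<epsilon> ((+) y ` C) \<phi>)) (lattice_restrict \<epsilon> ((+) y ` C) \<phi>))"
proof -
  let ?\<psi> = "\<lambda>y. lattice_restrict \<epsilon> ((+) y ` C) \<phi>" and ?\<theta> = "\<lambda>y j. of_bool (j - y \<in> C) :: real"
    and ?\<Lambda> = "\<lambda>j. LambdaR a V \<epsilon> R (lattice_point \<epsilon> j)"
  have S: "finite S" unfolding S_def by (rule finite_coord_support[OF e \<phi>])
  have \<psi>_at: "?\<psi> y (lattice_point \<epsilon> j) = ?\<theta> y j * f j" for y j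
    unfolding f_def by (rule lattice_restrict_translate_lattice_point[OF e])
  have local: "(\<Sum>j\<in>S. ?\<Lambda> j * (?\<theta> y j * f j)\<^sup>2) \<le> lat_inner \<epsilon> (Hop a V \<epsilon> (?\<psi> y)) (?\<psi> y)" for y
  proof -
    have small: "?\<psi> y \<in> c0 \<epsilon> (ball_lat \<epsilon> (lattice_point \<epsilon> j) R)"
      if "?\<psi> y (lattice_point \<epsilon> j) \<noteq> 0" for j
    proof (rule lattice_restrict_in_c0_ball[OF \<phi>])
      show "j \<in> (+) y ` C" using that \<psi>_at[of y j] by (force simp: algebra_simps)
      show "norm (lattice_point \<epsilon> c - lattice_point \<epsilon> c') < R" if "c \<in> (+) y ` C" "c' \<in> (+) y ` C" for c c'
        using that diam by (auto simp: lattice_point_diff)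
    qed
    have "\<And>x. ?\<psi> y x \<noteq> 0 \<Longrightarrow> x \<in> lattice_point \<epsilon> ` S"
      using c0_support_subset[OF e \<phi>] by (auto simp: S_def lattice_restrict_def split: if_splits)
    from sum_LambdaR_le_lat_inner_Hop[OF e K sym V S this small]
    show ?thesis by (simp add: \<psi>_at)
  qed
  have "real (card C) * (\<Sum>j\<in>S. ?\<Lambda> j * (f j)\<^sup>2) = (\<Sum>j\<in>S. ?\<Lambda> j * (f j)\<^sup>2 * (\<Sum>y\<in>translates_meeting S C. ?\<theta> y j * ?\<theta> y j))"
    by (simp add: sum_translate_indicators[OF S C] sum_distrib_left mult_ac cong: sum.cong)
  also have "\<dots> = (\<Sum>y\<in>translates_meeting S C. \<Sum>j\<in>S. ?\<Lambda> j * (?\<theta> y j * f j)\<^sup>2)"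
    by (subst sum.swap) (simp add: sum_distrib_left power2_eq_square mult_ac)
  also have "\<dots> \<le> (\<Sum>y\<in>translates_meeting S C. lat_inner \<epsilon> (Hop a V \<epsilon> (?\<psi> y)) (?\<psi> y))"
    by (rule sum_mono) (rule local)
  finally show ?thesis .
qed

lemma norm_iv_diff_cube_le:
  fixes c c' :: "int^'n::finite"
  assumes "c \<in> cube N" "c' \<in> cube N"
  shows "norm (iv (c - c')) \<le> real CARD('n) * real N"
proof (rule norm_iv_le)
  fix i
  have "0 \<le> c $ i" "c $ i < int N" "0 \<le> c' $ i" "c' $ i < int N"
    using assms by (auto simp: cube_def)
  then have "\<bar>(c - c') $ i\<bar> \<le> int N" by (simp add: abs_le_iff)
  then show "\<bar>real_of_int ((c - c') $ i)\<bar> \<le> real N" by (metis of_int_abs of_int_le_iff of_int_of_nat_eq)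
qed

lemma abs_cube_boundary_sum_le:
  fixes S :: "(int^'n::finite) set"
  assumes K: "first_moment_bound a \<epsilon> K" and sym: "hopping_symmetric a \<epsilon>" and S: "finite S"
  shows "\<bar>\<Sum>j\<in>S. \<Sum>j'\<in>S. a (j' - j) (lattice_point \<epsilon> j) \<epsilon> * real (card {c \<in> cube N. c + (j' - j) \<notin> cube N})
           * f j' * f j\<bar>
    \<le> real CARD('n) * real N ^ (CARD('n) - 1) * K * (\<Sum>j\<in>S. (f j)\<^sup>2)"
proof (rule abs_hopping_sum_le[OF K sym S])
  show "0 \<le> real CARD('n) * real N ^ (CARD('n) - 1)" by simp
  fix j j' :: "int^'n"
  let ?k = "j' - j"
  have "\<bar>real (card {c \<in> cube N. c + ?k \<notin> cube N})\<bar> \<le> real CARD('n) * norm (iv ?k) * real N ^ (CARD('n) - 1)"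
    using card_cube_shift_out_le[of N ?k] by simp
  also have "\<dots> \<le> real CARD('n) * real N ^ (CARD('n) - 1) * (1 + norm (iv ?k))"
    using mult_left_mono[of "norm (iv ?k)" "1 + norm (iv ?k)" "real CARD('n) * real N ^ (CARD('n) - 1)"]
    by (simp add: mult_ac)
  finally show "\<bar>real (card {c \<in> cube N. c + ?k \<notin> cube N})\<bar>
      \<le> real CARD('n) * real N ^ (CARD('n) - 1) * (1 + norm (iv ?k))" .
qed

lemma sum_LambdaR_le_lat_inner_Hop_plus_error:
  fixes \<phi> :: "real^'n::finite \<Rightarrow> real"
  assumes e: "0 < \<epsilon>" and K: "first_moment_bound a \<epsilon> K" and sym: "hopping_symmetric a \<epsilon>"
    and V: "\<And>x. bdd_below (V ` ball_lat \<epsilon> x R)"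
    and N: "0 < N" and R: "\<epsilon> * (real CARD('n) * real N) < R" and \<phi>: "\<phi> \<in> c0 \<epsilon> UNIV"
  defines "S \<equiv> coord_support \<epsilon> \<phi>" and "f \<equiv> \<lambda>j. \<phi> (lattice_point \<epsilon> j)"
  shows "real N * (\<Sum>j\<in>S. LambdaR a V \<epsilon> R (lattice_point \<epsilon> j) * (f j)\<^sup>2)
    \<le> real N * lat_inner \<epsilon> (Hop a V \<epsilon> \<phi>) \<phi> + real CARD('n) * K * (\<Sum>j\<in>S. (f j)\<^sup>2)"
proof -
  have e0: "\<epsilon> \<noteq> 0" using e by simp
  define P where "P = real N ^ (CARD('n) - 1)"
  have S: "finite S" unfolding S_def by (rule finite_coord_support[OF e0 \<phi>])
  have card_cube_eq: "real (card (cube N :: (int^'n) set)) = real N * P"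
    by (simp add: card_cube P_def flip: power_Suc)
  have diam: "norm (lattice_point \<epsilon> c - lattice_point \<epsilon> c') < R"
    if "c \<in> cube N" "c' \<in> cube N" for c c' :: "int^'n"
  proof -
    have "\<epsilon> * norm (iv (c - c')) \<le> \<epsilon> * (real CARD('n) * real N)"
      using norm_iv_diff_cube_le[OF that] e by (simp add: mult_left_mono)
    moreover have "norm (lattice_point \<epsilon> c - lattice_point \<epsilon> c') = \<epsilon> * norm (iv (c - c'))"
      using e by (simp add: lattice_point_diff)
    ultimately show ?thesis using R by linarith
  qed
  let ?\<psi> = "\<lambda>y. lattice_restrict \<epsilon> ((+) y ` cube N) \<phi>"
  let ?pieces = "\<Sum>y\<in>translates_meeting S (cube N). lat_inner \<epsilon> (Hop a V \<epsilon> (?\<psi> y)) (?\<psi> y)"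
    and ?err = "\<Sum>j\<in>S. \<Sum>j'\<in>S. a (j' - j) (lattice_point \<epsilon> j) \<epsilon>
                 * real (card {c \<in> cube N. c + (j' - j) \<notin> cube N}) * f j' * f j"
    and ?L = "\<Sum>j\<in>S. LambdaR a V \<epsilon> R (lattice_point \<epsilon> j) * (f j)\<^sup>2"
    and ?W = "\<Sum>j\<in>S. (f j)\<^sup>2"
  have "real N * P * lat_inner \<epsilon> (Hop a V \<epsilon> \<phi>) \<phi> = ?pieces + ?err"
    using lat_inner_Hop_translate_average[OF e0 finite_cube[of N] \<phi>, where a=a and V=V]
    unfolding S_def f_def card_cube_eq .
  moreover have "real N * P * ?L \<le> ?pieces"
    using sum_LambdaR_le_sum_restrictions[OF e0 K sym V finite_cube[of N] diam \<phi>]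
    unfolding S_def f_def card_cube_eq .
  moreover have "\<bar>?err\<bar> \<le> real CARD('n) * P * K * ?W"
    unfolding P_def by (rule abs_cube_boundary_sum_le[OF K sym S])
  ultimately have "P * (real N * ?L) \<le> P * (real N * lat_inner \<epsilon> (Hop a V \<epsilon> \<phi>) \<phi> + real CARD('n) * K * ?W)"
    by (simp add: algebra_simps)
  moreover have "0 < P" using N by (simp add: P_def)
  ultimately show ?thesis by (simp only: mult_le_cancel_left_pos)
qed

lemma lat_inner_Hop_ge_infsum_LambdaR:
  fixes \<phi> :: "real^'n::finite \<Rightarrow> real"
  assumes e: "0 < \<epsilon>" and K: "first_moment_bound a \<epsilon> K" and sym: "hopping_symmetric a \<epsilon>"
    and V: "\<And>x r. bdd_below (V ` ball_lat \<epsilon> x r)"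
    and N: "0 < N" and loss: "real CARD('n) * K \<le> \<delta> * real N"
    and R: "\<epsilon> * (real CARD('n) * real N) < R" and \<phi>: "\<phi> \<in> c0 \<epsilon> UNIV"
  shows "(\<Sum>\<^sub>\<infinity>x\<in>lattice \<epsilon>. (LambdaR a V \<epsilon> R x - \<delta>) * (\<phi> x)\<^sup>2) \<le> lat_inner \<epsilon> (Hop a V \<epsilon> \<phi>) \<phi>"
proof -
  have e0: "\<epsilon> \<noteq> 0" using e by simp
  define S where "S = coord_support \<epsilon> \<phi>"
  define W where "W = (\<Sum>j\<in>S. (\<phi> (lattice_point \<epsilon> j))\<^sup>2)"
  define L where "L = (\<Sum>j\<in>S. LambdaR a V \<epsilon> R (lattice_point \<epsilon> j) * (\<phi> (lattice_point \<epsilon> j))\<^sup>2)"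
  let ?Q = "lat_inner \<epsilon> (Hop a V \<epsilon> \<phi>) \<phi>"
  have "real N * L \<le> real N * ?Q + real CARD('n) * K * W"
    using sum_LambdaR_le_lat_inner_Hop_plus_error[OF e K sym V N R \<phi>] by (simp add: S_def L_def W_def)
  moreover have "real CARD('n) * K * W \<le> \<delta> * real N * W"
    unfolding W_def by (intro mult_right_mono loss sum_nonneg) simp_all
  ultimately have "real N * (L - \<delta> * W) \<le> real N * ?Q"
    by (simp add: right_diff_distrib mult_ac)
  then have "L - \<delta> * W \<le> ?Q"
    using N by simp
  moreover have "(\<Sum>\<^sub>\<infinity>x\<in>lattice \<epsilon>. (LambdaR a V \<epsilon> R x - \<delta>) * (\<phi> x)\<^sup>2) = L - \<delta> * W"
    using infsum_lattice_eq_sum[OF e0 finite_coord_support[OF e0 \<phi>], of "\<lambda>x. (LambdaR a V \<epsilon> R x - \<delta>) * (\<phi> x)\<^sup>2"]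
      c0_support_subset[OF e0 \<phi>]
    by (simp add: S_def L_def W_def left_diff_distrib sum_subtractf sum_distrib_left)
  ultimately show ?thesis by simp
qed

section \<open>First moments of the coefficients\<close>

lemma sum_inverse_1_plus_square_int_bounded:
  "\<exists>G. \<forall>T. finite T \<longrightarrow> (\<Sum>t\<in>T. 1 / (1 + (real_of_int t)\<^sup>2)) \<le> G"
proof -
  let ?h = "\<lambda>n::nat. 1 / (1 + (real n)\<^sup>2)"
  have "summable ?h"
  proof (rule summable_comparison_test'[OF inverse_power_summable[of 2]])
    show "norm (?h n) \<le> inverse (real n ^ 2)" if "n \<ge> 1" for n
      using that by (simp add: divide_inverse) (rule le_imp_inverse_le; simp)
  qed simp
  then have G: "sum ?h A \<le> suminf ?h" if "finite A" for A
    by (rule sum_le_suminf) (use that in auto)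
  have "(\<Sum>t\<in>T. 1 / (1 + (real_of_int t)\<^sup>2)) \<le> 2 * suminf ?h" if T: "finite T" for T :: "int set"
  proof -
    let ?g = "\<lambda>t::int. 1 / (1 + (real_of_int t)\<^sup>2)"
    have inj: "inj_on (\<lambda>t. nat \<bar>t\<bar>) (T \<inter> {0..})" "inj_on (\<lambda>t. nat \<bar>t\<bar>) (T - {0..})"
      by (auto simp: inj_on_def)
    have "sum ?g T = sum ?g (T \<inter> {0..}) + sum ?g (T - {0..})"
      using T by (simp add: sum.Int_Diff)
    also have "sum ?g (T \<inter> {0..}) = sum ?h ((\<lambda>t. nat \<bar>t\<bar>) ` (T \<inter> {0..}))"
      by (subst sum.reindex[OF inj(1)]) (auto intro!: sum.cong)
    also have "sum ?g (T - {0..}) = sum ?h ((\<lambda>t. nat \<bar>t\<bar>) ` (T - {0..}))"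
      by (subst sum.reindex[OF inj(2)]) (auto intro!: sum.cong simp: power2_eq_square)
    finally show ?thesis
      using G[of "(\<lambda>t. nat \<bar>t\<bar>) ` (T \<inter> {0..})"] G[of "(\<lambda>t. nat \<bar>t\<bar>) ` (T - {0..})"] T
      by simp
  qed
  then show ?thesis by blast
qed

lemma inverse_norm_iv_power_le_prod:
  fixes k :: "int^'n::finite"
  assumes "k \<noteq> 0"
  shows "1 / norm (iv k) ^ (2 * CARD('n)) \<le> 2 ^ CARD('n) * (\<Prod>i\<in>UNIV. 1 / (1 + (real_of_int (k $ i))\<^sup>2))"
proof -
  have n1: "1 \<le> (norm (iv k))\<^sup>2" using norm_iv_ge_1[OF assms] by (simp add: one_le_power)
  have "(real_of_int (k $ i))\<^sup>2 \<le> (norm (iv k))\<^sup>2" for i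
    using abs_component_le_norm_iv[of k i] by (simp add: abs_le_square_iff[symmetric])
  then have "1 + (real_of_int (k $ i))\<^sup>2 \<le> 2 * (norm (iv k))\<^sup>2" for i
    using n1 by (smt (verit))
  then have "(\<Prod>i\<in>UNIV. 1 + (real_of_int (k $ i))\<^sup>2) \<le> (\<Prod>i\<in>(UNIV::'n set). 2 * (norm (iv k))\<^sup>2)"
    by (intro prod_mono) (auto simp: add_nonneg_nonneg)
  also have "\<dots> = 2 ^ CARD('n) * norm (iv k) ^ (2 * CARD('n))"
    by (simp add: power_mult_distrib power_mult)
  finally have "(\<Prod>i\<in>UNIV. 1 + (real_of_int (k $ i))\<^sup>2) \<le> 2 ^ CARD('n) * norm (iv k) ^ (2 * CARD('n))" .
  moreover have "0 < (\<Prod>i\<in>(UNIV::'n set). 1 + (real_of_int (k $ i))\<^sup>2)"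
    by (rule prod_pos) (auto intro: add_pos_nonneg)
  moreover have "0 < norm (iv k) ^ (2 * CARD('n))"
    using norm_iv_ge_1[OF assms] by (intro zero_less_power) linarith
  ultimately show ?thesis by (simp add: prod_dividef divide_simps)
qed

lemma sum_inverse_norm_iv_power_bounded:
  "\<exists>Z. \<forall>F::(int^'n::finite) set. finite F \<longrightarrow> (\<Sum>k\<in>F - {0}. 1 / norm (iv k) ^ (2 * CARD('n))) \<le> Z"
proof -
  obtain G where G: "\<And>T. finite T \<Longrightarrow> (\<Sum>t\<in>T. 1 / (1 + (real_of_int t)\<^sup>2)) \<le> G"
    using sum_inverse_1_plus_square_int_bounded by blast
  let ?g = "\<lambda>i::'n. \<lambda>t::int. 1 / (1 + (real_of_int t)\<^sup>2)"
  have "(\<Sum>k\<in>F - {0}. 1 / norm (iv k) ^ (2 * CARD('n))) \<le> 2 ^ CARD('n) * G ^ CARD('n)"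
    if F: "finite F" for F :: "(int^'n) set"
  proof -
    define T where "T i = (\<lambda>k. k $ i) ` F" for i
    have fT: "finite (T i)" for i using F by (simp add: T_def)
    define B where "B = {k::int^'n. \<forall>i. k $ i \<in> T i}"
    have "F - {0} \<subseteq> B" by (auto simp: B_def T_def)
    have g_nonneg: "0 \<le> (\<Prod>i\<in>UNIV. ?g i (k $ i))" for k :: "int^'n"
      by (rule prod_nonneg) (auto intro: add_pos_nonneg)
    have "(\<Sum>k\<in>F - {0}. 1 / norm (iv k) ^ (2 * CARD('n)))
        \<le> (\<Sum>k\<in>F - {0}. 2 ^ CARD('n) * (\<Prod>i\<in>UNIV. ?g i (k $ i)))"
      by (rule sum_mono) (use inverse_norm_iv_power_le_prod in auto)
    also have "\<dots> \<le> (\<Sum>k\<in>B. 2 ^ CARD('n) * (\<Prod>i\<in>UNIV. ?g i (k $ i)))"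
      by (rule sum_mono2) (use \<open>F - {0} \<subseteq> B\<close> fT g_nonneg in \<open>auto simp: B_def finite_box\<close>)
    also have "\<dots> = 2 ^ CARD('n) * (\<Prod>i\<in>UNIV. \<Sum>t\<in>T i. ?g i t)"
      unfolding B_def sum_distrib_left[symmetric] using sum_prod_box[OF fT, of ?g] by simp
    also have "\<dots> \<le> 2 ^ CARD('n) * (\<Prod>i\<in>(UNIV::'n set). G)"
      by (intro mult_left_mono prod_mono) (auto intro!: sum_nonneg G fT intro: add_pos_nonneg)
    finally show ?thesis by simp
  qed
  then show ?thesis by blast
qed

lemma l2_weighted_le_nonneg:
  assumes "l2_weighted_le n g C"
  shows "0 \<le> C"
proof -
  have "0 \<le> (\<Sum>\<^sub>\<infinity>k. (norm (iv k) ^ n * g k)\<^sup>2)" by (rule infsum_nonneg) simp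
  from real_sqrt_ge_zero[OF this] show ?thesis using assms unfolding l2_weighted_le_def by linarith
qed

lemma sum_le_l2_weighted_bound:
  assumes "l2_weighted_le n g C" "finite F"
  shows "(\<Sum>k\<in>F. (norm (iv k) ^ n * g k)\<^sup>2) \<le> C\<^sup>2"
proof -
  let ?s = "\<Sum>\<^sub>\<infinity>k. (norm (iv k) ^ n * g k)\<^sup>2"
  have summable: "(\<lambda>k. (norm (iv k) ^ n * g k)\<^sup>2) summable_on UNIV" and "sqrt ?s \<le> C"
    using assms(1) unfolding l2_weighted_le_def by auto
  moreover have "0 \<le> ?s" by (rule infsum_nonneg) auto
  ultimately have "?s \<le> C\<^sup>2" using power_mono[of "sqrt ?s" C 2] by simp
  moreover have "(\<Sum>k\<in>F. (norm (iv k) ^ n * g k)\<^sup>2) \<le> ?s"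
    by (rule finite_sum_le_infsum[OF summable assms(2)]) auto
  ultimately show ?thesis by linarith
qed

lemma abs_le_l2_weighted_bound:
  assumes "l2_weighted_le n g C"
  shows "\<bar>norm (iv k) ^ n * g k\<bar> \<le> C"
proof (rule power2_le_imp_le)
  show "\<bar>norm (iv k) ^ n * g k\<bar>\<^sup>2 \<le> C\<^sup>2" using sum_le_l2_weighted_bound[OF assms, of "{k}"] by simp
qed (rule l2_weighted_le_nonneg[OF assms])

text \<open>For \<open>k \<noteq> 0\<close>, AM-GM gives \<open>|g\<^sub>k| (1 + |k|) \<le> 2 |g\<^sub>k| |k| \<le> (|k|\<^sup>d\<^sup>+\<^sup>1 g\<^sub>k)\<^sup>2 + |k|\<^sup>-\<^sup>2\<^sup>d\<close>,
  so a weighted \<open>\<ell>\<^sup>2\<close> bound of order \<open>d + 1\<close> controls the first moment.\<close>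

lemma first_moment_le_l2_weighted_bounds:
  fixes g :: "int^'n::finite \<Rightarrow> real"
  assumes Z: "\<And>F. finite F \<Longrightarrow> (\<Sum>k\<in>F - {0}. 1 / norm (iv (k::int^'n)) ^ (2 * CARD('n))) \<le> Z"
    and g0: "l2_weighted_le 0 g C0" and g1: "l2_weighted_le (CARD('n) + 1) g C1" and F: "finite F"
  shows "(\<Sum>k\<in>F. \<bar>g k\<bar> * (1 + norm (iv k))) \<le> C0 + C1\<^sup>2 + Z"
proof -
  let ?m = "\<lambda>k. \<bar>g k\<bar> * (1 + norm (iv k))"
  have zero_part: "sum ?m (F \<inter> {0}) \<le> C0"
    using abs_le_l2_weighted_bound[OF g0, of 0] order.trans[OF abs_ge_zero abs_le_l2_weighted_bound[OF g0]]
    by (cases "0 \<in> F") auto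
  have pointwise: "?m k \<le> (norm (iv k) ^ (CARD('n) + 1) * g k)\<^sup>2 + 1 / norm (iv k) ^ (2 * CARD('n))"
    if "k \<in> F - {0}" for k
  proof -
    have n1: "1 \<le> norm (iv k)" using norm_iv_ge_1 that by blast
    define u where "u = norm (iv k) ^ (CARD('n) + 1) * \<bar>g k\<bar>"
    define v where "v = 1 / norm (iv k) ^ CARD('n)"
    have "?m k \<le> 2 * (\<bar>g k\<bar> * norm (iv k))"
      using mult_left_mono[OF n1, of "\<bar>g k\<bar>"] by (simp add: algebra_simps)
    also have "\<dots> = 2 * u * v"
      using n1 by (simp add: u_def v_def field_simps)
    also have "\<dots> \<le> u\<^sup>2 + v\<^sup>2" by (rule sum_squares_bound)
    also have "\<dots> = (norm (iv k) ^ (CARD('n) + 1) * g k)\<^sup>2 + 1 / norm (iv k) ^ (2 * CARD('n))"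
      by (simp add: u_def v_def power_mult_distrib power_mult power_divide mult.commute)
    finally show ?thesis .
  qed
  have "sum ?m (F - {0})
      \<le> (\<Sum>k\<in>F - {0}. (norm (iv k) ^ (CARD('n) + 1) * g k)\<^sup>2 + 1 / norm (iv k) ^ (2 * CARD('n)))"
    by (rule sum_mono) (rule pointwise)
  also have "\<dots> \<le> C1\<^sup>2 + Z"
    unfolding sum.distrib using sum_le_l2_weighted_bound[OF g1, of "F - {0}"] Z[OF F] F by simp
  finally show ?thesis using zero_part sum.Int_Diff[OF F, of ?m "{0}"] by linarith
qed

lemma uniform_first_moment_bound:
  fixes g :: "'x \<Rightarrow> int^'n::finite \<Rightarrow> real"
  assumes "\<And>n. \<exists>C. \<forall>x. l2_weighted_le n (g x) C"
  shows "\<exists>M. \<forall>x F. finite F \<longrightarrow> (\<Sum>k\<in>F. \<bar>g x k\<bar> * (1 + norm (iv k))) \<le> M"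
proof -
  obtain Z where Z: "\<And>F::(int^'n) set. finite F \<Longrightarrow> (\<Sum>k\<in>F - {0}. 1 / norm (iv k) ^ (2 * CARD('n))) \<le> Z"
    using sum_inverse_norm_iv_power_bounded by blast
  obtain C0 C1 where "\<And>x. l2_weighted_le 0 (g x) C0" "\<And>x. l2_weighted_le (CARD('n) + 1) (g x) C1"
    using assms by meson
  then show ?thesis using first_moment_le_l2_weighted_bounds[OF Z] by blast
qed

lemma kinetic_hyp_hopping_symmetric:
  assumes "kinetic_hyp a a0 a1 R2" "0 < \<epsilon>" "\<epsilon> \<le> 1"
  shows "hopping_symmetric a \<epsilon>"
proof -
  have "\<forall>k x \<epsilon>. 0 < \<epsilon> \<and> \<epsilon> \<le> 1 \<longrightarrow> a k x \<epsilon> = a (- k) (x + \<epsilon> *\<^sub>R iv k) \<epsilon>"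
    using assms(1) unfolding kinetic_hyp_def by (elim conjE) assumption
  then show ?thesis using assms(2,3) unfolding hopping_symmetric_def by blast
qed

lemma kinetic_hyp_l2_weighted_bounds:
  assumes hyp: "kinetic_hyp a a0 a1 R2" and e: "0 < \<epsilon>" "\<epsilon> \<le> 1"
  shows "\<exists>C. \<forall>x. l2_weighted_le n (\<lambda>k. a0 k x) C"
    and "\<exists>C. \<forall>x. l2_weighted_le n (\<lambda>k. a1 k x) C"
    and "\<exists>C. \<forall>x. l2_weighted_le n (\<lambda>k. R2 k x \<epsilon>) C"
proof -
  have "\<forall>n bs. set bs \<subseteq> Basis \<longrightarrow> (\<exists>C. \<forall>x.
      l2_weighted_le n (\<lambda>k. iter_pd bs (a0 k) x) C \<and> l2_weighted_le n (\<lambda>k. iter_pd bs (a1 k) x) C)"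
    using hyp unfolding kinetic_hyp_def by (elim conjE) assumption
  from this[rule_format, where bs="[]" and n=n]
  show "\<exists>C. \<forall>x. l2_weighted_le n (\<lambda>k. a0 k x) C" "\<exists>C. \<forall>x. l2_weighted_le n (\<lambda>k. a1 k x) C"
    by auto
  have "\<forall>n bs. set bs \<subseteq> Basis \<longrightarrow> (\<exists>C. \<forall>x \<epsilon>. 0 < \<epsilon> \<and> \<epsilon> \<le> 1 \<longrightarrow>
      l2_weighted_le n (\<lambda>k. iter_pd bs (\<lambda>y. R2 k y \<epsilon>) x) (C * \<epsilon>\<^sup>2))"
    using hyp unfolding kinetic_hyp_def by (elim conjE) assumption
  from this[rule_format, where bs="[]" and n=n]
  show "\<exists>C. \<forall>x. l2_weighted_le n (\<lambda>k. R2 k x \<epsilon>) C"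
    using e by auto
qed

lemma kinetic_hyp_first_moment_bound:
  fixes a :: "int^'n::finite \<Rightarrow> real^'n \<Rightarrow> real \<Rightarrow> real"
  assumes hyp: "kinetic_hyp a a0 a1 R2" and e: "0 < \<epsilon>" "\<epsilon> \<le> 1"
  shows "\<exists>K. first_moment_bound a \<epsilon> K"
proof -
  note l2 = kinetic_hyp_l2_weighted_bounds[OF hyp e]
  obtain M0 M1 M2 where
    M0: "\<And>x F. finite F \<Longrightarrow> (\<Sum>k\<in>F. \<bar>a0 k x\<bar> * (1 + norm (iv k))) \<le> M0" and
    M1: "\<And>x F. finite F \<Longrightarrow> (\<Sum>k\<in>F. \<bar>a1 k x\<bar> * (1 + norm (iv k))) \<le> M1" and
    M2: "\<And>x F. finite F \<Longrightarrow> (\<Sum>k\<in>F. \<bar>R2 k x \<epsilon>\<bar> * (1 + norm (iv k))) \<le> M2"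
    using uniform_first_moment_bound[OF l2(1)] uniform_first_moment_bound[OF l2(2)]
      uniform_first_moment_bound[OF l2(3)] by meson
  have dec: "\<forall>k x \<epsilon>. 0 < \<epsilon> \<and> \<epsilon> \<le> 1 \<longrightarrow> a k x \<epsilon> = a0 k x + \<epsilon> * a1 k x + R2 k x \<epsilon>"
    using hyp unfolding kinetic_hyp_def by (elim conjE) assumption
  have "\<bar>a k x \<epsilon>\<bar> \<le> \<bar>a0 k x\<bar> + \<bar>a1 k x\<bar> + \<bar>R2 k x \<epsilon>\<bar>" for k x
  proof -
    have "a k x \<epsilon> = a0 k x + \<epsilon> * a1 k x + R2 k x \<epsilon>"
      using dec e by blast
    moreover have "\<bar>\<epsilon> * a1 k x\<bar> \<le> \<bar>a1 k x\<bar>"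
      using e by (simp add: abs_mult mult_left_le_one_le)
    ultimately show ?thesis by linarith
  qed
  then have split: "(\<Sum>k\<in>F. \<bar>a k x \<epsilon>\<bar> * (1 + norm (iv k)))
      \<le> (\<Sum>k\<in>F. \<bar>a0 k x\<bar> * (1 + norm (iv k)) + \<bar>a1 k x\<bar> * (1 + norm (iv k))
            + \<bar>R2 k x \<epsilon>\<bar> * (1 + norm (iv k)))" for x F
    by (intro sum_mono) (simp add: mult_right_mono flip: distrib_right)
  have "(\<Sum>k\<in>F. \<bar>a k x \<epsilon>\<bar> * (1 + norm (iv k))) \<le> M0 + M1 + M2" if "finite F" for x F
    using split[of x F] M0[OF that, of x] M1[OF that, of x] M2[OF that, of x]
    unfolding sum.distrib by linarith
  then show ?thesis unfolding first_moment_bound_def by blast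
qed

lemma potential_hyp_bdd_below_ball:
  assumes hyp: "potential_hyp \<epsilon>0 V0 V1 RV" and e: "0 < \<epsilon>" "\<epsilon> \<le> \<epsilon>0"
  shows "bdd_below ((\<lambda>x. V0 x + \<epsilon> * V1 x + RV x \<epsilon>) ` ball_lat \<epsilon> x r)"
proof -
  obtain C N where poly: "\<And>y. y \<in> lattice \<epsilon> \<Longrightarrow> \<bar>V0 y + \<epsilon> * V1 y + RV y \<epsilon>\<bar> \<le> C * (1 + norm y) ^ N"
  proof -
    have "\<forall>\<epsilon>. 0 < \<epsilon> \<and> \<epsilon> \<le> \<epsilon>0 \<longrightarrow> (\<exists>C N. \<forall>x\<in>lattice \<epsilon>.
        \<bar>V0 x + \<epsilon> * V1 x + RV x \<epsilon>\<bar> \<le> C * (1 + norm x) ^ N)"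
      using hyp unfolding potential_hyp_def by (elim conjE) assumption
    then show ?thesis using that e by blast
  qed
  have "- (\<bar>C\<bar> * (1 + norm x + r) ^ N) \<le> V0 y + \<epsilon> * V1 y + RV y \<epsilon>" if y: "y \<in> ball_lat \<epsilon> x r" for y
  proof -
    have "norm y \<le> norm x + r"
      using y norm_triangle_ineq2[of y x] by (auto simp: ball_lat_def norm_minus_commute)
    then have "C * (1 + norm y) ^ N \<le> \<bar>C\<bar> * (1 + norm x + r) ^ N"
      by (intro mult_mono power_mono) auto
    then show ?thesis using poly[of y] y by (auto simp: ball_lat_def)
  qed
  then show ?thesis by (intro bdd_belowI) auto
qed

theorem lemmaB2:
  fixes a :: "int^'n \<Rightarrow> real^'n \<Rightarrow> real \<Rightarrow> real"
    and a0 a1 :: "int^'n \<Rightarrow> real^'n \<Rightarrow> real"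
    and R2 :: "int^'n \<Rightarrow> real^'n \<Rightarrow> real \<Rightarrow> real"
    and V0 V1 :: "real^'n \<Rightarrow> real"
    and RV :: "real^'n \<Rightarrow> real \<Rightarrow> real"
    and \<epsilon> \<epsilon>0 \<delta> :: real
  assumes "kinetic_hyp a a0 a1 R2"
    and "potential_hyp \<epsilon>0 V0 V1 RV"
    and "symbol_hyp a0 V0"
    and "0 < \<epsilon>" "\<epsilon> \<le> 1" "\<epsilon> \<le> \<epsilon>0"
    and "0 < \<delta>"
  shows "\<exists>R\<delta>>0. \<forall>R>R\<delta>. \<forall>\<phi>\<in>c0 \<epsilon> UNIV.
    lat_inner \<epsilon> (Hop a (\<lambda>x. V0 x + \<epsilon> * V1 x + RV x \<epsilon>) \<epsilon> \<phi>) \<phi>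
    \<ge> (\<Sum>\<^sub>\<infinity>x\<in>lattice \<epsilon>.
          (LambdaR a (\<lambda>x. V0 x + \<epsilon> * V1 x + RV x \<epsilon>) \<epsilon> R x - \<delta>) * (\<phi> x)\<^sup>2)"
proof -
  obtain K where K: "first_moment_bound a \<epsilon> K"
    using kinetic_hyp_first_moment_bound[OF assms(1,4,5)] by blast
  define N where "N = nat \<lceil>real CARD('n) * K / \<delta>\<rceil> + 1"
  have N: "0 < N" by (simp add: N_def)
  have "real CARD('n) * K / \<delta> \<le> real N" unfolding N_def by linarith
  then have loss: "real CARD('n) * K \<le> \<delta> * real N"
    using \<open>0 < \<delta>\<close> by (simp add: divide_le_eq mult.commute)
  have "0 < \<epsilon> * (real CARD('n) * real N)" using \<open>0 < \<epsilon>\<close> N by simp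
  moreover have "lat_inner \<epsilon> (Hop a (\<lambda>x. V0 x + \<epsilon> * V1 x + RV x \<epsilon>) \<epsilon> \<phi>) \<phi>
      \<ge> (\<Sum>\<^sub>\<infinity>x\<in>lattice \<epsilon>. (LambdaR a (\<lambda>x. V0 x + \<epsilon> * V1 x + RV x \<epsilon>) \<epsilon> R x - \<delta>) * (\<phi> x)\<^sup>2)"
    if "\<epsilon> * (real CARD('n) * real N) < R" "\<phi> \<in> c0 \<epsilon> UNIV" for R \<phi>
    by (rule lat_inner_Hop_ge_infsum_LambdaR[OF \<open>0 < \<epsilon>\<close> K
          kinetic_hyp_hopping_symmetric[OF assms(1,4,5)] potential_hyp_bdd_below_ball[OF assms(2,4,6)]
          N loss that])
  ultimately show ?thesis by blast
qed

end
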